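(* Let $\mathcal{X}$ be a set, $K\ge1$, and let classifiers be maps $\mathcal{X}\to[K]$. Let $\mathcal{B}$ assign to each $x\in\mathcal{X}$ a set $\mathcal{B}(x)\subseteq\mathcal{X}$, and for $V\subseteq\mathcal{X}$ let $\mathcal{N}(V)=\{x\in\mathcal{X}:\exists x'\in V \text{ with } \mathcal{B}(x)\cap\mathcal{B}(x')\neq\emptyset\}$. For a classifier $F$ let $\mathcal{S}_{\mathcal{B}}(F)=\{x: F(x)=F(x')\ \forall x'\in\mathcal{B}(x)\}$. Let $F$, $H$, $G_{pl}$ be classifiers. Define $\mathcal{M}(F)=\{x:F(x)\neq H(x)\}$, $\mathcal{M}(G_{pl})=\{x:G_{pl}(x)\neq H(x)\}$, $\mathcal{M}_{pl}(F)=\{x:F(x)\neq G_{pl}(x)\}$, and write $A^c$ for the complement of $A$ in $\mathcal{X}$. Let $S=\mathcal{S}_{\mathcal{B}}(F)\cap\mathcal{S}_{\mathcal{B}}(H)$ and $V=\mathcal{M}(F)\cap\mathcal{M}(G_{pl})\cap S$. Then $\mathcal{N}(V)\cap\mathcal{M}^c(F)\cap S=\emptyset$ and $\mathcal{N}(V)\cap\mathcal{M}^c(G_{pl})\cap S\subseteq\mathcal{M}_{pl}(F)$.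
   Context: $G_{pl}$ plays the role of a pseudo-labeler and $H$ of a reference classifier. *)

theory Defs
  imports Main
begin

definition nbhd :: "'a set \<Rightarrow> ('a \<Rightarrow> 'a set) \<Rightarrow> 'a set \<Rightarrow> 'a set" where
  "nbhd X B V = {x \<in> X. \<exists>x'\<in>V. B x \<inter> B x' \<noteq> {}}"

definition robust_set :: "'a set \<Rightarrow> ('a \<Rightarrow> 'a set) \<Rightarrow> ('a \<Rightarrow> nat) \<Rightarrow> 'a set" where
  "robust_set X B F = {x \<in> X. \<forall>x'\<in>B x. F x = F x'}"

definition mistakes :: "'a set \<Rightarrow> ('a \<Rightarrow> nat) \<Rightarrow> ('a \<Rightarrow> nat) \<Rightarrow> 'a set" where
  "mistakes X F G = {x \<in> X. F x \<noteq> G x}"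

end

theory Submission
  imports Defs
begin

text \<open>If \<open>x\<close> and \<open>x'\<close> are robust for both \<open>F\<close> and \<open>H\<close> and their neighbourhoods meet
  in some \<open>z\<close>, then \<open>F x = F z = F x'\<close> and \<open>H x = H z = H x'\<close>. So a robust mistake of \<open>F\<close>
  propagates to every robust point of its neighbourhood, and at a point where \<open>G_pl\<close> agrees
  with \<open>H\<close> this mistake is a disagreement with \<open>G_pl\<close>.\<close>

lemma robust_set_eq_if_overlap:
  assumes "x \<in> robust_set X B F" and "x' \<in> robust_set X B F" and "B x \<inter> B x' \<noteq> {}"
  shows "F x = F x'"
proof -
  obtain z where "z \<in> B x" and "z \<in> B x'"
    using assms(3) by blast
  then have "F x = F z" and "F x' = F z"
    using assms(1,2) unfolding robust_set_def by auto
  then show ?thesis by simp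
qed

lemma nbhd_robust_subset_mistakes:
  assumes "V \<subseteq> mistakes X F H \<inter> robust_set X B F \<inter> robust_set X B H"
  shows "nbhd X B V \<inter> robust_set X B F \<inter> robust_set X B H \<subseteq> mistakes X F H"
proof
  fix x
  assume x: "x \<in> nbhd X B V \<inter> robust_set X B F \<inter> robust_set X B H"
  then obtain x' where "x' \<in> V" and overlap: "B x \<inter> B x' \<noteq> {}"
    unfolding nbhd_def by blast
  with assms have x': "x' \<in> mistakes X F H \<inter> robust_set X B F \<inter> robust_set X B H"
    by blast
  have "F x = F x'"
    using x x' overlap by (blast intro: robust_set_eq_if_overlap)
  moreover have "H x = H x'"
    using x x' overlap by (blast intro: robust_set_eq_if_overlap)
  ultimately show "x \<in> mistakes X F H"
    using x x' unfolding mistakes_def nbhd_def by auto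
qed

theorem mainTheorem2:
  fixes X :: "'a set" and K :: nat and B :: "'a \<Rightarrow> 'a set"
    and F H G_pl :: "'a \<Rightarrow> nat"
  assumes "K \<ge> 1"
    and "\<And>x. x \<in> X \<Longrightarrow> B x \<subseteq> X"
    and "F ` X \<subseteq> {1..K}" and "H ` X \<subseteq> {1..K}" and "G_pl ` X \<subseteq> {1..K}"
  defines "S \<equiv> robust_set X B F \<inter> robust_set X B H"
  defines "V \<equiv> mistakes X F H \<inter> mistakes X G_pl H \<inter> S"
  shows "nbhd X B V \<inter> (X - mistakes X F H) \<inter> S = {} \<and>
         nbhd X B V \<inter> (X - mistakes X G_pl H) \<inter> S \<subseteq> mistakes X F G_pl"
proof -
  have "V \<subseteq> mistakes X F H \<inter> robust_set X B F \<inter> robust_set X B H"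
    unfolding V_def S_def by blast
  then have "nbhd X B V \<inter> S \<subseteq> mistakes X F H"
    unfolding S_def using nbhd_robust_subset_mistakes by blast
  then show ?thesis
    unfolding mistakes_def by auto
qed

end
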